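(* Assume $\mathbf{E}(\ln\rho_0)\ne0$ and let $\kappa>0$ be defined by $\mathbf{E}(\rho_0^\kappa)=1$ if $\mathbf{E}(\ln\rho_0)<0$, and by $\mathbf{E}(\rho_0^{-\kappa})=1$ if $\mathbf{E}(\ln\rho_0)>0$. Let $\gamma>0$ and $0<\varepsilon<\gamma/\kappa$. Then for $\mu$-almost all $\boldsymbol\omega$ there is $n_0(\boldsymbol\omega,\varepsilon)$ such that for all $n\ge n_0(\boldsymbol\omega,\varepsilon)$ there is a trap of depth $\big(\frac{\gamma}{\kappa}-\varepsilon\big)\ln n$ located at some interval contained in $[0,n^\gamma]$.
   Context: Setting: $(\omega_x^+)_{x\in\mathbb{Z}}$ i.i.d. with law $\mu$, $\omega_x^+\in[\varepsilon_0,1-\varepsilon_0]$ for some $\varepsilon_0>0$, $\omega_x^-=1-\omega_x^+$, $\rho_i=\omega_i^-/\omega_i^+$, $\mathbf{E}$ expectation under $\mu$; strict nestling: $\inf\{a:\mu(\omega_0^+\le a)>0\}<1/2<\sup\{a:\mu(\omega_0^+\ge a)>0\}$. Potential: $V(0)=0$, $V(x)=\sum_{i=1}^x\ln\rho_i$ for $x>0$, $V(x)=\sum_{i=x+1}^0\ln(1/\rho_i)$ for $x<0$. Trap: there is a trap of depth $h$ located at $[x-b_1,x+b_2]$ with bottom at $x$ if $V(x)=\min_{y\in[x-b_1,x+b_2]}V(y)$, $V(x-b_1)-V(x)\ge h$ and $V(x+b_2)-V(x)\ge h$ (depth at least $h$). *)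

theory Defs
  imports "HOL-Probability.Probability"
begin

text \<open>Environment: omega x is omega_x^+, and rho_i = omega_i^- / omega_i^+ = (1 - omega_i^+)/omega_i^+.\<close>

definition rho :: "(int \<Rightarrow> real) \<Rightarrow> int \<Rightarrow> real" where
  "rho \<omega> i = (1 - \<omega> i) / \<omega> i"

definition potential :: "(int \<Rightarrow> real) \<Rightarrow> int \<Rightarrow> real" where
  "potential \<omega> x =
     (if x = 0 then 0
      else if x > 0 then (\<Sum>i\<in>{1..x}. ln (rho \<omega> i))
      else (\<Sum>i\<in>{x+1..0}. ln (1 / rho \<omega> i)))"

definition trap :: "(int \<Rightarrow> real) \<Rightarrow> real \<Rightarrow> int \<Rightarrow> int \<Rightarrow> int \<Rightarrow> bool" where
  "trap \<omega> h x b1 b2 \<longleftrightarrow>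
     0 \<le> b1 \<and> 0 \<le> b2 \<and>
     (\<forall>y\<in>{x-b1..x+b2}. potential \<omega> x \<le> potential \<omega> y) \<and>
     potential \<omega> (x - b1) - potential \<omega> x \<ge> h \<and>
     potential \<omega> (x + b2) - potential \<omega> x \<ge> h"

end

theory Submission
  imports Defs "HOL-Real_Asymp.Real_Asymp"
begin

(* Almost surely every omega_i lies in [eps0, 1 - eps0], so ln rho_i = f (omega_i) for a bounded
   Borel function f (the clipped log-ratio).  A "valley" -- a fall of the partial sums of f by h followed
   by a rise by h -- inside an interval of nonnegative sites produces a trap of depth h there.  Assume
   first E f < 0 and E exp (kappa f) = 1.  Then, for any r > 1, on blocks of length O(h):
     - a fall of h has probability >= 1/2 (exponential Chebyshev bound, negative drift), and
     - a rise of h has probability >= c exp (- kappa r h) (Cramer's lower bound, obtained from a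
       three-term Chernoff sandwich for the exponentially tilted walk).
   Cutting [0, n^gamma] into about n^gamma / (A ln n) disjoint blocks, independence shows that no block
   is a valley of depth c ln n, c = gamma/kappa - eps, with probability <= n^(-2); Borel-Cantelli ends
   the argument.  For E f > 0 one applies the same to -f, which swaps falls and rises. *)

lemma exp_le_quadratic:
  fixes y :: real
  assumes "\<bar>y\<bar> \<le> 1"
  shows "exp y \<le> 1 + y + y\<^sup>2"
proof (cases "0 \<le> y")
  case True
  then show ?thesis using exp_bound[of y] assms by auto
next
  case False
  define z where "z = - y"
  have z: "0 < z" "z \<le> 1" using False assms by (auto simp: z_def)
  have "exp y = inverse (exp z)" by (simp add: z_def exp_minus)
  also have "\<dots> \<le> inverse (1 + z)" using z by (intro le_imp_inverse_le) auto
  also have "\<dots> \<le> 1 - z + z\<^sup>2"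
  proof -
    have "1 \<le> (1 - z + z\<^sup>2) * (1 + z)"
      using z by (simp add: algebra_simps power2_eq_square power3_eq_cube)
    then show ?thesis using z by (simp add: field_simps)
  qed
  finally show ?thesis by (simp add: z_def)
qed

lemma add_one_less_exp:
  fixes y :: real
  assumes "y \<noteq> 0"
  shows "1 + y < exp y"
proof (cases "0 \<le> 1 + y / 2")
  case True
  have "(1 + y / 2)\<^sup>2 \<le> exp (y / 2) ^ 2"
    using True by (intro power_mono) auto
  also have "exp (y / 2) ^ 2 = exp y" by (simp flip: exp_of_nat_mult)
  finally have "1 + y + y\<^sup>2 / 4 \<le> exp y" by (simp add: power2_eq_square algebra_simps)
  moreover have "0 < y\<^sup>2" using assms by simp
  ultimately show ?thesis by linarith
next
  case False
  then show ?thesis using exp_gt_zero[of y] by linarith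
qed

lemma exp_minus_two_le: "exp (-2 :: real) \<le> 1 / 4"
proof -
  have "2 \<le> exp (1 :: real)" using exp_ge_add_one_self[of 1] by simp
  then have "2 * 2 \<le> exp (1 :: real) * exp 1" by (intro mult_mono) auto
  then have "4 \<le> exp (2 :: real)" by (simp flip: exp_add)
  then show ?thesis by (simp add: exp_minus field_simps)
qed

lemma power_le_exp:
  fixes p x :: real
  assumes "0 \<le> p" "p \<le> 1 + x"
  shows "p ^ L \<le> exp (x * real L)"
proof -
  have "p ^ L \<le> exp x ^ L"
    using assms exp_ge_add_one_self[of x] by (intro power_mono) linarith+
  also have "\<dots> = exp (x * real L)" by (simp add: exp_of_nat_mult[symmetric] mult.commute)
  finally show ?thesis .
qed

lemma block_length_choice:
  fixes a \<delta> h :: real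
  assumes "0 < a" "0 < \<delta>" "0 \<le> h"
  obtains L :: nat where "1 \<le> L" "h + 2 / \<delta> \<le> a * real L" "a * real L \<le> h + 2 / \<delta> + a"
    "real L \<le> ((1 + 2 / \<delta>) / a + 1) * h + ((1 + 2 / \<delta>) / a + 1)"
proof -
  define x where "x = (h + 2 / \<delta>) / a"
  have x0: "0 < x" unfolding x_def using assms by (simp add: add_nonneg_pos)
  define L where "L = nat \<lceil>x\<rceil>"
  have Lx: "x \<le> real L" "real L \<le> x + 1" unfolding L_def using x0 by linarith+
  have x_eq: "h + 2 / \<delta> = a * x" unfolding x_def using assms by simp
  have x_le: "x + 1 \<le> ((1 + 2 / \<delta>) / a + 1) * h + ((1 + 2 / \<delta>) / a + 1)"
  proof -
    have "x + 1 = h / a + (2 / \<delta> / a + 1)" unfolding x_def by (simp add: add_divide_distrib)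
    also have "\<dots> \<le> ((1 + 2 / \<delta>) / a + 1) * h + ((1 + 2 / \<delta>) / a + 1)"
      using assms by (intro add_mono) (auto simp: field_simps)
    finally show ?thesis .
  qed
  show ?thesis
  proof (rule that)
    show "1 \<le> L" unfolding L_def using x0 by linarith
    show "h + 2 / \<delta> \<le> a * real L" using x_eq Lx assms by (simp add: mult_left_mono)
    have "a * real L \<le> a * (x + 1)" using Lx assms by (intro mult_left_mono) auto
    then show "a * real L \<le> h + 2 / \<delta> + a" using x_eq by (simp add: algebra_simps)
    show "real L \<le> ((1 + 2 / \<delta>) / a + 1) * h + ((1 + 2 / \<delta>) / a + 1)" using x_le Lx by linarith
  qed
qed

text \<open>Pointwise inequality behind the Chernoff sandwich: \<open>exp (\<kappa> x)\<close> is dominated by one of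
  three terms according to whether \<open>x < h\<close>, \<open>h \<le> x \<le> H\<close> or \<open>x > H\<close>.\<close>
lemma exp_three_regimes:
  fixes t \<kappa> s x h H :: real
  assumes "t \<le> \<kappa>" "\<kappa> \<le> s" "0 \<le> \<kappa>"
  shows "exp (\<kappa> * x) \<le> exp (t * x) * exp ((\<kappa> - t) * h) + exp (\<kappa> * H) * of_bool (h \<le> x)
           + exp (s * x) * exp (- ((s - \<kappa>) * H))"
proof -
  have low: "exp (\<kappa> * x) \<le> exp (t * x) * exp ((\<kappa> - t) * h)" if "x < h"
  proof -
    have "(\<kappa> - t) * x \<le> (\<kappa> - t) * h" using that assms by (intro mult_left_mono) auto
    then show ?thesis by (simp add: algebra_simps flip: exp_add)
  qed
  have mid: "exp (\<kappa> * x) \<le> exp (\<kappa> * H)" if "x \<le> H"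
    using that assms by (simp add: mult_left_mono)
  have high: "exp (\<kappa> * x) \<le> exp (s * x) * exp (- ((s - \<kappa>) * H))" if "H < x"
  proof -
    have "(s - \<kappa>) * H \<le> (s - \<kappa>) * x" using that assms by (intro mult_left_mono) auto
    then show ?thesis by (simp add: algebra_simps flip: exp_add)
  qed
  have nonneg: "0 \<le> exp (t * x) * exp ((\<kappa> - t) * h)" "0 \<le> exp (\<kappa> * H) * of_bool (h \<le> x)"
    "0 \<le> exp (s * x) * exp (- ((s - \<kappa>) * H))" by auto
  consider "x < h" | "h \<le> x" "x \<le> H" | "H < x" by linarith
  then show ?thesis
  proof cases
    case 1
    then show ?thesis using low nonneg by linarith
  next
    case 2
    then have "exp (\<kappa> * H) * of_bool (h \<le> x) = exp (\<kappa> * H)" by simp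
    then show ?thesis using 2 mid nonneg by linarith
  next
    case 3
    then show ?thesis using high nonneg by linarith
  qed
qed

lemma valley_count_asymptotics:
  fixes \<gamma> A c c0 e :: real
  assumes "0 < \<gamma>" "0 < A" "0 < c" "0 < c0" "0 \<le> e" "e < \<gamma>"
  shows "eventually (\<lambda>n::nat. 2 * ln (real n)
           \<le> c0 * real n powr (- e) * (real n powr \<gamma> / (2 * A * (c * ln (real n)) + 2 * A) - 1)) sequentially"
proof -
  have "eventually (\<lambda>x. 2 * ln x \<le> c0 * x powr (- e) * (x powr \<gamma> / (2 * A * (c * ln x) + 2 * A) - 1)) at_top"
    using assms by real_asymp
  then show ?thesis by (rule eventually_compose_filterlim[OF _ filterlim_real_sequentially])
qed

text \<open>For \<open>- g\<close> this expresses a fall of \<open>h\<close>.\<close>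
definition rise_likely :: "real measure \<Rightarrow> (real \<Rightarrow> real) \<Rightarrow> real \<Rightarrow> real \<Rightarrow> real \<Rightarrow> bool" where
  "rise_likely mu g A h q \<longleftrightarrow> (\<exists>L::nat. 1 \<le> L \<and> real L \<le> A * h + A \<and>
     (\<forall>J. finite J \<longrightarrow> card J = L \<longrightarrow>
        q \<le> measure (PiM UNIV (\<lambda>_::int. mu)) {\<omega> \<in> space (PiM UNIV (\<lambda>_::int. mu)). h \<le> (\<Sum>i\<in>J. g (\<omega> i))}))"

lemma rise_likely_mono:
  assumes "rise_likely mu g A h q" "A \<le> A'" "0 \<le> h"
  shows "rise_likely mu g A' h q"
proof -
  have "A * h + A \<le> A' * h + A'" using assms(2,3) by (intro add_mono mult_right_mono) auto
  then show ?thesis using assms(1) unfolding rise_likely_def by (meson order_trans)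
qed

definition valley :: "(real \<Rightarrow> real) \<Rightarrow> (int \<Rightarrow> real) \<Rightarrow> real \<Rightarrow> int \<Rightarrow> nat \<Rightarrow> nat \<Rightarrow> bool" where
  "valley g \<omega> h a l1 l2 \<longleftrightarrow>
     h \<le> (\<Sum>i\<in>{a+1..a+int l1}. - g (\<omega> i)) \<and> h \<le> (\<Sum>i\<in>{a+int l1+1..a+int l1+int l2}. g (\<omega> i))"

locale iid_sequence =
  fixes mu :: "real measure"
  assumes prob_space_mu: "prob_space mu"
begin

abbreviation PM :: "(int \<Rightarrow> real) measure" where
  "PM \<equiv> PiM (UNIV :: int set) (\<lambda>_. mu)"

lemma product_prob_space: "product_prob_space (\<lambda>_::int. mu)"
  using prob_space_mu
  by (simp add: product_prob_space_def product_prob_space_axioms_def product_sigma_finite_def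
      prob_space_imp_sigma_finite)

sublocale P: prob_space PM
  using prob_space_mu by (intro prob_space_PiM) auto

lemma distr_coordinate: "distr PM mu (\<lambda>\<omega>. \<omega> i) = mu"
proof -
  interpret Prod: product_prob_space "\<lambda>_::int. mu" UNIV by (rule product_prob_space)
  show ?thesis using Prod.PiM_component[of i] by simp
qed

lemma coordinates_indep: "P.indep_vars (\<lambda>_. mu) (\<lambda>i \<omega>. \<omega> i) UNIV"
proof -
  interpret Prod: product_prob_space "\<lambda>_::int. mu" UNIV by (rule product_prob_space)
  have rv: "(\<lambda>\<omega>. \<omega> i) \<in> measurable PM mu" for i :: int
    by (rule measurable_component_singleton) simp
  have "PiM UNIV (\<lambda>i::int. distr PM mu (\<lambda>\<omega>. \<omega> i)) = PM"
    by (intro PiM_cong) (auto simp: distr_coordinate)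
  moreover have "(\<lambda>\<omega>::int \<Rightarrow> real. restrict (\<lambda>i. \<omega> i) UNIV) = (\<lambda>\<omega>. \<omega>)"
    by (auto simp: restrict_def)
  ultimately show ?thesis
    by (subst P.indep_vars_iff_distr_eq_PiM) (use rv in \<open>simp_all add: distr_id\<close>)
qed

lemma prob_indep_blocks:
  fixes K :: "'j \<Rightarrow> int set" and E :: "'j \<Rightarrow> (int \<Rightarrow> real) \<Rightarrow> bool"
  assumes J: "finite J" "J \<noteq> {}" and disj: "disjoint_family_on K J"
    and meas: "\<And>j. j \<in> J \<Longrightarrow> {x \<in> space (PiM (K j) (\<lambda>_. mu)). E j x} \<in> sets (PiM (K j) (\<lambda>_. mu))"
    and local: "\<And>j \<omega>. j \<in> J \<Longrightarrow> E j (restrict \<omega> (K j)) = E j \<omega>"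
  shows "P.prob {\<omega> \<in> space PM. \<forall>j\<in>J. E j \<omega>} = (\<Prod>j\<in>J. P.prob {\<omega> \<in> space PM. E j \<omega>})"
proof -
  let ?X = "\<lambda>j \<omega>. restrict \<omega> (K j)"
  have "P.indep_vars (\<lambda>j. PiM (K j) (\<lambda>_. mu)) (\<lambda>j \<omega>. restrict (\<lambda>i. \<omega> i) (K j)) J"
    by (rule P.indep_vars_restrict[OF coordinates_indep]) (use disj in auto)
  then have ind: "P.indep_sets (\<lambda>j. {?X j -` A \<inter> space PM | A. A \<in> sets (PiM (K j) (\<lambda>_. mu))}) J"
    unfolding P.indep_vars_def2 by simp
  have event: "{\<omega> \<in> space PM. E j \<omega>} = ?X j -` {x \<in> space (PiM (K j) (\<lambda>_. mu)). E j x} \<inter> space PM"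
    if "j \<in> J" for j
  proof -
    have "?X j \<omega> \<in> space (PiM (K j) (\<lambda>_. mu))" if "\<omega> \<in> space PM" for \<omega>
      by (rule measurable_space[OF measurable_restrict_subset that]) simp
    then show ?thesis using local[OF that] by blast
  qed
  have "P.prob (\<Inter>j\<in>J. {\<omega> \<in> space PM. E j \<omega>}) = (\<Prod>j\<in>J. P.prob {\<omega> \<in> space PM. E j \<omega>})"
  proof (rule P.indep_setsD[OF ind subset_refl J(2) J(1)], intro ballI)
    fix j assume j: "j \<in> J"
    show "{\<omega> \<in> space PM. E j \<omega>} \<in> {?X j -` A \<inter> space PM | A. A \<in> sets (PiM (K j) (\<lambda>_. mu))}"
      unfolding event[OF j]
      by (intro CollectI exI[of _ "{x \<in> space (PiM (K j) (\<lambda>_. mu)). E j x}"] conjI refl meas[OF j])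
  qed
  moreover have "(\<Inter>j\<in>J. {\<omega> \<in> space PM. E j \<omega>}) = {\<omega> \<in> space PM. \<forall>j\<in>J. E j \<omega>}"
    using J(2) by auto
  ultimately show ?thesis by simp
qed

lemma block_sum_measurable:
  fixes f :: "real \<Rightarrow> real"
  assumes "f \<in> borel_measurable mu" "S \<subseteq> K"
  shows "(\<lambda>x. \<Sum>i\<in>S. f (x i)) \<in> borel_measurable (PiM K (\<lambda>_. mu))"
  using assms by (intro borel_measurable_sum measurable_compose[OF measurable_component_singleton]) auto

lemma AE_coordinates: "AE x in mu. Q x \<Longrightarrow> AE \<omega> in PM. \<forall>i. Q (\<omega> i)"
proof -
  interpret Prod: product_prob_space "\<lambda>_::int. mu" UNIV by (rule product_prob_space)
  show "AE x in mu. Q x \<Longrightarrow> AE \<omega> in PM. \<forall>i. Q (\<omega> i)"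
    unfolding AE_all_countable using Prod.AE_component by auto
qed

end

locale iid_sums = iid_sequence +
  fixes g :: "real \<Rightarrow> real"
  assumes g_measurable [measurable]: "g \<in> borel_measurable mu"
begin

lemma valley_measurable_block:
  assumes "{a+1..a+int l1+int l2} \<subseteq> K"
  shows "(\<lambda>\<omega>. valley g \<omega> h a l1 l2) \<in> measurable (PiM K (\<lambda>_. mu)) (count_space UNIV)"
proof -
  have [measurable]: "(\<lambda>x. \<Sum>i\<in>{a+1..a+int l1}. - g (x i)) \<in> borel_measurable (PiM K (\<lambda>_. mu))"
    by (rule block_sum_measurable) (use assms in auto)
  have [measurable]: "(\<lambda>x. \<Sum>i\<in>{a+int l1+1..a+int l1+int l2}. g (x i)) \<in> borel_measurable (PiM K (\<lambda>_. mu))"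
    by (rule block_sum_measurable) (use assms in auto)
  show ?thesis unfolding valley_def by measurable
qed

lemma valley_measurable [measurable]: "(\<lambda>\<omega>. valley g \<omega> h a l1 l2) \<in> measurable PM (count_space UNIV)"
  by (rule valley_measurable_block) simp

lemma valley_restrict:
  assumes "{a+1..a+int l1+int l2} \<subseteq> K"
  shows "valley g (restrict \<omega> K) h a l1 l2 = valley g \<omega> h a l1 l2"
proof -
  have sub: "{a+1..a+int l1} \<subseteq> K" "{a+int l1+1..a+int l1+int l2} \<subseteq> K" using assms by auto
  have "(\<Sum>i\<in>{a+1..a+int l1}. - g (restrict \<omega> K i)) = (\<Sum>i\<in>{a+1..a+int l1}. - g (\<omega> i))"
    using sub(1) by (intro sum.cong) auto
  moreover have "(\<Sum>i\<in>{a+int l1+1..a+int l1+int l2}. g (restrict \<omega> K i))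
      = (\<Sum>i\<in>{a+int l1+1..a+int l1+int l2}. g (\<omega> i))"
    using sub(2) by (intro sum.cong) auto
  ultimately show ?thesis unfolding valley_def by simp
qed

text \<open>The fall and the subsequent rise forming a valley live on disjoint blocks, so they are independent.\<close>
lemma prob_valley:
  "P.prob {\<omega> \<in> space PM. valley g \<omega> h a l1 l2} =
     P.prob {\<omega> \<in> space PM. h \<le> (\<Sum>i\<in>{a+1..a+int l1}. - g (\<omega> i))} *
     P.prob {\<omega> \<in> space PM. h \<le> (\<Sum>i\<in>{a+int l1+1..a+int l1+int l2}. g (\<omega> i))}"
proof -
  define K where "K b = (if b then {a+1..a+int l1} else {a+int l1+1..a+int l1+int l2})" for b
  define E where "E b \<omega> = (if b then h \<le> (\<Sum>i\<in>K True. - g (\<omega> i)) else h \<le> (\<Sum>i\<in>K False. g (\<omega> i)))"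
    for b \<omega>
  have indep: "P.prob {\<omega> \<in> space PM. \<forall>b\<in>UNIV. E b \<omega>} = (\<Prod>b\<in>UNIV. P.prob {\<omega> \<in> space PM. E b \<omega>})"
  proof (rule prob_indep_blocks)
    show "disjoint_family_on K UNIV" by (auto simp: disjoint_family_on_def K_def)
    fix b :: bool
    have [measurable]: "(\<lambda>x. \<Sum>i\<in>K True. - g (x i)) \<in> borel_measurable (PiM (K True) (\<lambda>_. mu))"
      "(\<lambda>x. \<Sum>i\<in>K False. g (x i)) \<in> borel_measurable (PiM (K False) (\<lambda>_. mu))"
      by (auto intro!: block_sum_measurable)
    show "{x \<in> space (PiM (K b) (\<lambda>_. mu)). E b x} \<in> sets (PiM (K b) (\<lambda>_. mu))"
      by (cases b) (simp_all add: E_def)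
    show "E b (restrict \<omega> (K b)) = E b \<omega>" for \<omega>
      unfolding E_def by (cases b) (auto intro!: sum.cong)
  qed auto
  have event: "{\<omega> \<in> space PM. \<forall>b\<in>UNIV. E b \<omega>} = {\<omega> \<in> space PM. valley g \<omega> h a l1 l2}"
    unfolding UNIV_bool by (auto simp: E_def K_def valley_def)
  have prod: "(\<Prod>b\<in>UNIV. P.prob {\<omega> \<in> space PM. E b \<omega>})
      = P.prob {\<omega> \<in> space PM. E True \<omega>} * P.prob {\<omega> \<in> space PM. E False \<omega>}"
    unfolding UNIV_bool by simp
  show ?thesis using indep unfolding event prod by (simp add: E_def K_def)
qed

lemma prob_not_valley:
  assumes fall: "\<And>J. finite J \<Longrightarrow> card J = l1 \<Longrightarrow> q1 \<le> P.prob {\<omega> \<in> space PM. h \<le> (\<Sum>i\<in>J. - g (\<omega> i))}"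
    and rise: "\<And>J. finite J \<Longrightarrow> card J = l2 \<Longrightarrow> q2 \<le> P.prob {\<omega> \<in> space PM. h \<le> (\<Sum>i\<in>J. g (\<omega> i))}"
    and q: "0 \<le> q1" "0 \<le> q2"
  shows "P.prob {\<omega> \<in> space PM. \<not> valley g \<omega> h a l1 l2} \<le> exp (- (q1 * q2))"
proof -
  have "q1 * q2 \<le> P.prob {\<omega> \<in> space PM. valley g \<omega> h a l1 l2}"
    unfolding prob_valley using fall rise q by (intro mult_mono) auto
  moreover have "{\<omega> \<in> space PM. \<not> valley g \<omega> h a l1 l2} = space PM - {\<omega> \<in> space PM. valley g \<omega> h a l1 l2}"
    by auto
  ultimately have "P.prob {\<omega> \<in> space PM. \<not> valley g \<omega> h a l1 l2} \<le> 1 - q1 * q2"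
    by (simp add: P.prob_compl)
  then show ?thesis using exp_ge_add_one_self[of "- (q1 * q2)"] by linarith
qed

text \<open>Consecutive disjoint blocks are independent, so the chance that none of \<open>K\<close> of them is a
  valley decays exponentially in \<open>K\<close>.\<close>
lemma prob_no_valley:
  assumes fall: "\<And>J. finite J \<Longrightarrow> card J = l1 \<Longrightarrow> q1 \<le> P.prob {\<omega> \<in> space PM. h \<le> (\<Sum>i\<in>J. - g (\<omega> i))}"
    and rise: "\<And>J. finite J \<Longrightarrow> card J = l2 \<Longrightarrow> q2 \<le> P.prob {\<omega> \<in> space PM. h \<le> (\<Sum>i\<in>J. g (\<omega> i))}"
    and q: "0 \<le> q1" "0 \<le> q2"
  shows "P.prob {\<omega> \<in> space PM. \<forall>j\<in>{..<K}. \<not> valley g \<omega> h (int (j * (l1 + l2))) l1 l2}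
           \<le> exp (- (q1 * q2) * real K)"
proof (cases "K = 0")
  case True
  then show ?thesis by simp
next
  case False
  define a where "a j = int (j * (l1 + l2))" for j
  define Blk where "Blk j = {a j + 1 .. a j + int l1 + int l2}" for j
  have "P.prob {\<omega> \<in> space PM. \<forall>j\<in>{..<K}. \<not> valley g \<omega> h (a j) l1 l2}
      = (\<Prod>j\<in>{..<K}. P.prob {\<omega> \<in> space PM. \<not> valley g \<omega> h (a j) l1 l2})"
  proof (rule prob_indep_blocks)
    have "Blk j \<inter> Blk j' = {}" if "j < j'" for j j'
    proof -
      have "Suc j * (l1 + l2) \<le> j' * (l1 + l2)" using that by (intro mult_right_mono) auto
      then have "a j + int l1 + int l2 \<le> a j'" unfolding a_def by (simp add: algebra_simps flip: of_nat_add of_nat_mult)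
      then show ?thesis unfolding Blk_def by auto
    qed
    then show "disjoint_family_on Blk {..<K}"
      unfolding disjoint_family_on_def by (metis Int_commute nat_neq_iff)
    fix j
    have [measurable]: "(\<lambda>\<omega>. valley g \<omega> h (a j) l1 l2) \<in> measurable (PiM (Blk j) (\<lambda>_. mu)) (count_space UNIV)"
      by (rule valley_measurable_block) (simp add: Blk_def)
    show "{x \<in> space (PiM (Blk j) (\<lambda>_. mu)). \<not> valley g x h (a j) l1 l2} \<in> sets (PiM (Blk j) (\<lambda>_. mu))"
      by measurable
    show "(\<not> valley g (restrict \<omega> (Blk j)) h (a j) l1 l2) = (\<not> valley g \<omega> h (a j) l1 l2)" for \<omega>
      by (simp add: valley_restrict Blk_def)
  qed (use False in auto)
  also have "\<dots> \<le> (\<Prod>j\<in>{..<K}. exp (- (q1 * q2)))"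
    using prob_not_valley[OF fall rise q] by (intro prod_mono) auto
  also have "\<dots> = exp (- (q1 * q2) * real K)" by (simp add: exp_of_nat_mult[symmetric] mult.commute)
  finally show ?thesis unfolding a_def .
qed

text \<open>With fall and rise probabilities \<open>q1\<close>, \<open>q2\<close> at block lengths \<open>\<le> A h + A\<close>, the interval
  \<open>[0, N]\<close> contains \<open>\<ge> N / (2 A h + 2 A) - 1\<close> disjoint candidate blocks.\<close>
lemma prob_no_valley_below:
  assumes fall: "rise_likely mu (\<lambda>x. - g x) A h q1" and rise: "rise_likely mu g A h q2"
    and q: "0 \<le> q1" "0 \<le> q2" and "0 \<le> N"
  shows "P.prob {\<omega> \<in> space PM. \<not> (\<exists>a l1 l2. 0 \<le> a \<and> real_of_int (a + int l1 + int l2) \<le> N \<and>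
              valley g \<omega> h a l1 l2)}
         \<le> exp (- (q1 * q2) * (N / (2 * A * h + 2 * A) - 1))"
proof -
  obtain l1 where l1: "1 \<le> l1" "real l1 \<le> A * h + A"
    "\<And>J. finite J \<Longrightarrow> card J = l1 \<Longrightarrow> q1 \<le> P.prob {\<omega> \<in> space PM. h \<le> (\<Sum>i\<in>J. - g (\<omega> i))}"
    using fall unfolding rise_likely_def by blast
  obtain l2 where l2: "1 \<le> l2" "real l2 \<le> A * h + A"
    "\<And>J. finite J \<Longrightarrow> card J = l2 \<Longrightarrow> q2 \<le> P.prob {\<omega> \<in> space PM. h \<le> (\<Sum>i\<in>J. g (\<omega> i))}"
    using rise unfolding rise_likely_def by blast
  define L where "L = l1 + l2"
  define K where "K = nat \<lfloor>N / real L\<rfloor>"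
  have L: "0 < real L" "real L \<le> 2 * A * h + 2 * A" using l1 l2 unfolding L_def by auto
  have K_upper: "real K * real L \<le> N"
    using L(1) \<open>0 \<le> N\<close> unfolding K_def by (simp add: pos_le_divide_eq[symmetric] of_nat_floor)
  have K_lower: "N / (2 * A * h + 2 * A) - 1 \<le> real K"
  proof -
    have "N / (2 * A * h + 2 * A) \<le> N / real L" using L \<open>0 \<le> N\<close> by (intro divide_left_mono) auto
    moreover have "N / real L - 1 \<le> real K" unfolding K_def using \<open>0 \<le> N\<close> L by linarith
    ultimately show ?thesis by linarith
  qed
  have "P.prob {\<omega> \<in> space PM. \<not> (\<exists>a l1 l2. 0 \<le> a \<and> real_of_int (a + int l1 + int l2) \<le> N \<and>
              valley g \<omega> h a l1 l2)}
      \<le> P.prob {\<omega> \<in> space PM. \<forall>j\<in>{..<K}. \<not> valley g \<omega> h (int (j * L)) l1 l2}"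
  proof (rule P.finite_measure_mono)
    have "real_of_int (int (j * L) + int l1 + int l2) \<le> N" if "j < K" for j
    proof -
      have "real (Suc j * L) \<le> real (K * L)" using that by (intro of_nat_mono mult_right_mono) auto
      then show ?thesis using K_upper unfolding L_def by (simp add: algebra_simps)
    qed
    then show "{\<omega> \<in> space PM. \<not> (\<exists>a l1 l2. 0 \<le> a \<and> real_of_int (a + int l1 + int l2) \<le> N \<and>
              valley g \<omega> h a l1 l2)} \<subseteq> {\<omega> \<in> space PM. \<forall>j\<in>{..<K}. \<not> valley g \<omega> h (int (j * L)) l1 l2}"
      by fastforce
  qed measurable
  also have "\<dots> \<le> exp (- (q1 * q2) * real K)"
    unfolding L_def by (rule prob_no_valley[OF l1(3) l2(3) q])
  also have "\<dots> \<le> exp (- (q1 * q2) * (N / (2 * A * h + 2 * A) - 1))"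
    using K_lower q by (simp add: mult_left_mono)
  finally show ?thesis .
qed

text \<open>One term of the Borel--Cantelli series: once the block count \<open>n^\<gamma> / O(ln n)\<close> times the
  valley probability \<open>c0 n^(- \<theta> c)\<close> exceeds \<open>2 ln n\<close>, a valley of depth \<open>c ln n\<close> is missing
  from \<open>[0, n^\<gamma>]\<close> with probability at most \<open>n^(-2)\<close>.\<close>
lemma prob_no_valley_up_to:
  assumes c: "0 < c" and c0: "0 < c0" and n: "0 < n"
    and bounds: "\<And>h. 0 \<le> h \<Longrightarrow> \<exists>q1 q2. 0 \<le> q1 \<and> 0 \<le> q2 \<and> c0 * exp (- (\<theta> * h)) \<le> q1 * q2 \<and>
                   rise_likely mu (\<lambda>x. - g x) A h q1 \<and> rise_likely mu g A h q2"
    and asym: "2 * ln (real n)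
      \<le> c0 * real n powr (- (\<theta> * c)) * (real n powr \<gamma> / (2 * A * (c * ln (real n)) + 2 * A) - 1)"
  shows "P.prob {\<omega> \<in> space PM. \<not> (\<exists>a l1 l2. 0 \<le> a \<and>
           real_of_int (a + int l1 + int l2) \<le> real n powr \<gamma> \<and> valley g \<omega> (c * ln (real n)) a l1 l2)}
         \<le> inverse (real n ^ 2)"
proof -
  define h where "h = c * ln (real n)"
  define X where "X = real n powr \<gamma> / (2 * A * h + 2 * A) - 1"
  have h: "0 \<le> h" using n c unfolding h_def by simp
  obtain q1 q2 where q: "0 \<le> q1" "0 \<le> q2" "c0 * exp (- (\<theta> * h)) \<le> q1 * q2"
    "rise_likely mu (\<lambda>x. - g x) A h q1" "rise_likely mu g A h q2"
    using bounds[OF h] by blast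
  have "exp (- (\<theta> * h)) = real n powr (- (\<theta> * c))" using n unfolding h_def by (simp add: powr_def)
  then have asym': "2 * ln (real n) \<le> c0 * exp (- (\<theta> * h)) * X"
    using asym unfolding X_def h_def by (simp add: mult.assoc)
  moreover have "0 \<le> 2 * ln (real n)" using n by simp
  ultimately have "0 \<le> (c0 * exp (- (\<theta> * h))) * X" by linarith
  moreover have "0 < c0 * exp (- (\<theta> * h))" using c0 by simp
  ultimately have "0 \<le> X" by (simp add: zero_le_mult_iff)
  then have "2 * ln (real n) \<le> q1 * q2 * X" using asym' q(3) by (meson mult_right_mono order_trans)
  then have "exp (- (q1 * q2) * X) \<le> exp (- 2 * ln (real n))" by simp
  also have "\<dots> = inverse (real n ^ 2)"
  proof -
    have "exp (2 * ln (real n)) = exp (ln (real n)) ^ 2" using exp_of_nat_mult[of 2 "ln (real n)"] by simp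
    then show ?thesis using n by (simp add: exp_minus)
  qed
  finally show ?thesis
    using prob_no_valley_below[OF q(4,5) q(1,2), of "real n powr \<gamma>"] unfolding X_def h_def by simp
qed

lemma valleys_eventually:
  assumes c: "0 < c" and \<gamma>: "0 < \<gamma>" and \<theta>: "0 \<le> \<theta>" "\<theta> * c < \<gamma>" and A: "0 < A" and c0: "0 < c0"
    and bounds: "\<And>h. 0 \<le> h \<Longrightarrow> \<exists>q1 q2. 0 \<le> q1 \<and> 0 \<le> q2 \<and> c0 * exp (- (\<theta> * h)) \<le> q1 * q2 \<and>
                   rise_likely mu (\<lambda>x. - g x) A h q1 \<and> rise_likely mu g A h q2"
  shows "AE \<omega> in PM. \<exists>n0::nat. \<forall>n\<ge>n0. \<exists>a l1 l2. 0 \<le> a \<and>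
           real_of_int (a + int l1 + int l2) \<le> real n powr \<gamma> \<and> valley g \<omega> (c * ln (real n)) a l1 l2"
proof -
  define F where "F n = {\<omega> \<in> space PM. \<not> (\<exists>a l1 l2. 0 \<le> a \<and>
           real_of_int (a + int l1 + int l2) \<le> real n powr \<gamma> \<and> valley g \<omega> (c * ln (real n)) a l1 l2)}"
    for n :: nat
  have F_sets [measurable]: "F n \<in> sets PM" for n unfolding F_def by measurable
  have "0 \<le> \<theta> * c" using \<theta>(1) c by simp
  note asymptotics = valley_count_asymptotics[OF \<gamma> A c c0 this \<theta>(2)]
  have "eventually (\<lambda>n. norm (P.prob (F n)) \<le> inverse (real n ^ 2)) sequentially"
    using asymptotics eventually_gt_at_top[of "0::nat"]
    by eventually_elim (use prob_no_valley_up_to[OF c c0 _ bounds] in \<open>auto simp: F_def\<close>)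
  then have "summable (\<lambda>n. P.prob (F n))"
    by (rule summable_comparison_test_ev) (rule inverse_power_summable, simp)
  then have "AE \<omega> in PM. eventually (\<lambda>n. \<omega> \<in> space PM - F n) sequentially"
    by (intro borel_cantelli_AE1) (auto simp: P.emeasure_eq_measure)
  then show ?thesis
    by (rule AE_mp) (auto intro!: AE_I2 simp: F_def eventually_sequentially)
qed

end

locale bounded_iid_sums = iid_sums +
  fixes B :: real
  assumes g_bounded: "\<And>x. \<bar>g x\<bar> \<le> B" and B_pos: "0 < B"
begin

definition mgf :: "real \<Rightarrow> real" where
  "mgf t = (\<integral>x. exp (t * g x) \<partial>mu)"

definition mgf_deriv :: "real \<Rightarrow> real" where
  "mgf_deriv t = (\<integral>x. g x * exp (t * g x) \<partial>mu)"

lemma exp_g_bounded: "exp (t * g x) \<le> exp (\<bar>t\<bar> * B)"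
proof -
  have "\<bar>t * g x\<bar> \<le> \<bar>t\<bar> * B" using g_bounded[of x] by (simp add: abs_mult mult_left_mono)
  then show ?thesis by simp
qed

lemma integrable_exp_g: "integrable mu (\<lambda>x. exp (t * g x))"
proof -
  interpret M: prob_space mu by (rule prob_space_mu)
  show ?thesis
    using exp_g_bounded by (intro M.integrable_const_bound[where B = "exp (\<bar>t\<bar> * B)"]) auto
qed

lemma integrable_g_exp_g: "integrable mu (\<lambda>x. g x * exp (t * g x))"
proof -
  interpret M: prob_space mu by (rule prob_space_mu)
  have "\<bar>g x * exp (t * g x)\<bar> \<le> B * exp (\<bar>t\<bar> * B)" for x
    unfolding abs_mult using g_bounded[of x] exp_g_bounded[of t x] by (intro mult_mono) auto
  then show ?thesis
    by (intro M.integrable_const_bound[where B = "B * exp (\<bar>t\<bar> * B)"]) auto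
qed

lemma mgf_nonneg: "0 \<le> mgf t"
  unfolding mgf_def by (intro integral_nonneg_AE) auto

lemma mgf_perturb:
  assumes "\<bar>d\<bar> * B \<le> 1"
  shows "mgf (t + d) \<le> (1 + d\<^sup>2 * B\<^sup>2) * mgf t + d * mgf_deriv t"
proof -
  have "mgf (t + d) \<le> (\<integral>x. exp (t * g x) * ((1 + d\<^sup>2 * B\<^sup>2) + d * g x) \<partial>mu)"
    unfolding mgf_def
  proof (intro integral_mono integrable_exp_g)
    show "integrable mu (\<lambda>x. exp (t * g x) * ((1 + d\<^sup>2 * B\<^sup>2) + d * g x))"
      using integrable_exp_g[of t] integrable_g_exp_g[of t]
      by (simp add: algebra_simps)
    fix x
    have dg: "\<bar>d * g x\<bar> \<le> \<bar>d\<bar> * B" using g_bounded[of x] by (simp add: abs_mult mult_left_mono)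
    then have "(d * g x)\<^sup>2 \<le> d\<^sup>2 * B\<^sup>2"
      by (metis abs_ge_zero abs_mult_self_eq power2_eq_square power_mono power_mult_distrib)
    then have "exp (d * g x) \<le> (1 + d\<^sup>2 * B\<^sup>2) + d * g x"
      using exp_le_quadratic[of "d * g x"] dg assms by linarith
    then show "exp ((t + d) * g x) \<le> exp (t * g x) * ((1 + d\<^sup>2 * B\<^sup>2) + d * g x)"
      by (simp add: distrib_right exp_add mult_left_mono)
  qed
  also have "\<dots> = (1 + d\<^sup>2 * B\<^sup>2) * mgf t + d * mgf_deriv t"
    using integrable_exp_g[of t] integrable_g_exp_g[of t]
    by (simp add: mgf_def mgf_deriv_def algebra_simps)
  finally show ?thesis .
qed

text \<open>The integrand
  \<open>exp (\<kappa> g) (exp (- \<kappa> g) - 1 + \<kappa> g)\<close> is nonnegative and vanishes only where \<open>g = 0\<close>.\<close>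
lemma mgf_deriv_pos:
  assumes \<kappa>: "0 < \<kappa>" and mgf_one: "mgf \<kappa> = 1" and mean: "(\<integral>x. g x \<partial>mu) \<noteq> 0"
  shows "0 < mgf_deriv \<kappa>"
proof -
  interpret M: prob_space mu by (rule prob_space_mu)
  define F where "F x = exp (\<kappa> * g x) * (exp (- \<kappa> * g x) - 1 + \<kappa> * g x)" for x
  have F: "F x = 1 - exp (\<kappa> * g x) + \<kappa> * (g x * exp (\<kappa> * g x))" for x
    by (simp add: F_def algebra_simps flip: exp_add)
  have F_int: "integrable mu F"
    unfolding F using integrable_exp_g integrable_g_exp_g by auto
  have F_nonneg: "0 \<le> F x" for x
    unfolding F_def using exp_ge_add_one_self[of "- \<kappa> * g x"] by (intro mult_nonneg_nonneg) auto
  have F_integral: "(\<integral>x. F x \<partial>mu) = \<kappa> * mgf_deriv \<kappa>"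
    using integrable_exp_g integrable_g_exp_g mgf_one
    unfolding F mgf_def mgf_deriv_def by (simp add: M.prob_space)
  have "(\<integral>x. F x \<partial>mu) \<noteq> 0"
  proof
    assume "(\<integral>x. F x \<partial>mu) = 0"
    then have "AE x in mu. F x = 0"
      using integral_nonneg_eq_0_iff_AE[OF F_int] F_nonneg by auto
    then have "AE x in mu. g x = 0"
    proof (rule AE_mp, intro AE_I2 impI)
      fix x assume "F x = 0"
      then have "exp (- \<kappa> * g x) = 1 + (- \<kappa> * g x)" unfolding F_def by simp
      then have "- \<kappa> * g x = 0" using add_one_less_exp[of "- \<kappa> * g x"] by fastforce
      then show "g x = 0" using \<kappa> by simp
    qed
    then have "(\<integral>x. g x \<partial>mu) = 0" by (simp add: integral_eq_zero_AE)
    then show False using mean by simp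
  qed
  moreover have "0 \<le> (\<integral>x. F x \<partial>mu)" using F_nonneg by (intro integral_nonneg_AE) auto
  ultimately have "0 < \<kappa> * mgf_deriv \<kappa>" using F_integral by linarith
  then show ?thesis using \<kappa> by (simp add: zero_less_mult_iff)
qed

lemma exp_block_sum_indep: "P.indep_vars (\<lambda>_. borel) (\<lambda>i \<omega>. exp (t * g (\<omega> i))) J"
  by (rule P.indep_vars_compose2[where Y = "\<lambda>i x. exp (t * g x)",
        OF P.indep_vars_subset[OF coordinates_indep]]) auto

lemma integrable_exp_coordinate: "integrable PM (\<lambda>\<omega>. exp (t * g (\<omega> i)))"
  using exp_g_bounded by (intro P.integrable_const_bound[where B = "exp (\<bar>t\<bar> * B)"]) auto

lemma integrable_exp_block_sum:
  assumes "finite J"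
  shows "integrable PM (\<lambda>\<omega>. exp (t * (\<Sum>i\<in>J. g (\<omega> i))))"
  using P.indep_vars_integrable[OF assms exp_block_sum_indep integrable_exp_coordinate] assms
  by (simp add: sum_distrib_left exp_sum)

lemma mgf_block_sum:
  assumes "finite J"
  shows "(\<integral>\<omega>. exp (t * (\<Sum>i\<in>J. g (\<omega> i))) \<partial>PM) = mgf t ^ card J"
proof -
  have coordinate: "(\<integral>\<omega>. exp (t * g (\<omega> i)) \<partial>PM) = mgf t" for i
  proof -
    have "mgf t = (\<integral>x. exp (t * g x) \<partial>distr PM mu (\<lambda>\<omega>. \<omega> i))"
      by (simp add: mgf_def distr_coordinate)
    also have "\<dots> = (\<integral>\<omega>. exp (t * g (\<omega> i)) \<partial>PM)" by (rule integral_distr) auto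
    finally show ?thesis by simp
  qed
  have "(\<integral>\<omega>. exp (t * (\<Sum>i\<in>J. g (\<omega> i))) \<partial>PM) = (\<integral>\<omega>. (\<Prod>i\<in>J. exp (t * g (\<omega> i))) \<partial>PM)"
    using assms by (simp add: sum_distrib_left exp_sum)
  also have "\<dots> = (\<Prod>i\<in>J. \<integral>\<omega>. exp (t * g (\<omega> i)) \<partial>PM)"
    by (rule P.indep_vars_lebesgue_integral[OF assms exp_block_sum_indep integrable_exp_coordinate])
  finally show ?thesis by (simp add: coordinate)
qed

text \<open>Exponential Chebyshev estimate sandwiching the event \<open>{h \<le> S}\<close> for \<open>S = \<Sum>i\<in>J. g (\<omega> i)\<close>
  between the regimes \<open>S < h\<close> and \<open>S > H\<close>, both of which are exponentially unlikely under the
  measure tilted by \<open>exp (\<kappa> S)\<close> when \<open>mgf \<kappa> = 1\<close>.\<close>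
lemma rise_prob_sandwich:
  assumes J: "finite J" and "t \<le> \<kappa>" "\<kappa> \<le> s" "0 \<le> \<kappa>" and mgf_one: "mgf \<kappa> = 1"
  shows "1 \<le> mgf t ^ card J * exp ((\<kappa> - t) * h)
           + exp (\<kappa> * H) * P.prob {\<omega> \<in> space PM. h \<le> (\<Sum>i\<in>J. g (\<omega> i))}
           + mgf s ^ card J * exp (- ((s - \<kappa>) * H))"
proof -
  define S where "S \<omega> = (\<Sum>i\<in>J. g (\<omega> i))" for \<omega>
  define A where "A = {\<omega> \<in> space PM. h \<le> S \<omega>}"
  have [measurable]: "S \<in> borel_measurable PM" unfolding S_def by measurable
  have A_sets [measurable]: "A \<in> sets PM" unfolding A_def by measurable
  have exp_S: "integrable PM (\<lambda>\<omega>. exp (r * S \<omega>))" for r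
    unfolding S_def by (rule integrable_exp_block_sum[OF J])
  have ind_A: "integrable PM (indicator A :: _ \<Rightarrow> real)" by (rule P.integrable_const_bound[where B = 1]) auto
  have pointwise: "exp (\<kappa> * S \<omega>) \<le> exp (t * S \<omega>) * exp ((\<kappa> - t) * h) + exp (\<kappa> * H) * indicator A \<omega>
             + exp (s * S \<omega>) * exp (- ((s - \<kappa>) * H))" if "\<omega> \<in> space PM" for \<omega>
    using exp_three_regimes[OF assms(2-4), of "S \<omega>" h H] that by (simp add: A_def indicator_def)
  have "1 = (\<integral>\<omega>. exp (\<kappa> * S \<omega>) \<partial>PM)" unfolding S_def using mgf_block_sum[OF J, of \<kappa>] mgf_one by simp
  also have "\<dots> \<le> (\<integral>\<omega>. exp (t * S \<omega>) * exp ((\<kappa> - t) * h) + exp (\<kappa> * H) * indicator A \<omega>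
             + exp (s * S \<omega>) * exp (- ((s - \<kappa>) * H)) \<partial>PM)"
    by (intro integral_mono_AE) (use exp_S ind_A pointwise in auto)
  also have "\<dots> = (\<integral>\<omega>. exp (t * S \<omega>) \<partial>PM) * exp ((\<kappa> - t) * h) + exp (\<kappa> * H) * P.prob A
             + (\<integral>\<omega>. exp (s * S \<omega>) \<partial>PM) * exp (- ((s - \<kappa>) * H))"
    using exp_S ind_A by simp
  finally show ?thesis unfolding S_def A_def by (simp add: mgf_block_sum[OF J])
qed

lemma fall_prob_bound:
  assumes J: "finite J" and t: "0 \<le> t"
  shows "1 \<le> P.prob {\<omega> \<in> space PM. (\<Sum>i\<in>J. g (\<omega> i)) \<le> - h} + mgf t ^ card J * exp (t * h)"
proof -
  define S where "S \<omega> = (\<Sum>i\<in>J. g (\<omega> i))" for \<omega>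
  define A where "A = {\<omega> \<in> space PM. S \<omega> \<le> - h}"
  have [measurable]: "S \<in> borel_measurable PM" unfolding S_def by measurable
  have A_sets [measurable]: "A \<in> sets PM" unfolding A_def by measurable
  have exp_S: "integrable PM (\<lambda>\<omega>. exp (t * S \<omega>))"
    unfolding S_def by (rule integrable_exp_block_sum[OF J])
  have ind_A: "integrable PM (indicator A :: _ \<Rightarrow> real)" by (rule P.integrable_const_bound[where B = 1]) auto
  have pointwise: "1 \<le> indicator A \<omega> + exp (t * S \<omega>) * exp (t * h)" if "\<omega> \<in> space PM" for \<omega>
  proof (cases "S \<omega> \<le> - h")
    case False
    then have "0 \<le> t * S \<omega> + t * h" using t by (simp add: mult_nonneg_nonneg flip: distrib_left)
    then show ?thesis by (simp add: indicator_def flip: exp_add)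
  qed (use that in \<open>simp add: A_def\<close>)
  have "(1::real) = (\<integral>\<omega>. 1 \<partial>PM)" using P.prob_space by simp
  also have "\<dots> \<le> (\<integral>\<omega>. indicator A \<omega> + exp (t * S \<omega>) * exp (t * h) \<partial>PM)"
    by (intro integral_mono_AE) (use exp_S ind_A pointwise in auto)
  also have "\<dots> = P.prob A + (\<integral>\<omega>. exp (t * S \<omega>) \<partial>PM) * exp (t * h)"
    using exp_S ind_A by simp
  finally show ?thesis unfolding S_def A_def by (simp add: mgf_block_sum[OF J])
qed

lemma mgf_power_small:
  assumes "0 < \<delta>" "mgf t \<le> 1 - \<delta> * a" "h + 2 / \<delta> \<le> a * real L"
  shows "mgf t ^ L * exp (\<delta> * h) \<le> 1 / 4"
proof -
  have "mgf t ^ L * exp (\<delta> * h) \<le> exp ((- \<delta> * a) * real L) * exp (\<delta> * h)"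
    using power_le_exp[of "mgf t" "- \<delta> * a" L] mgf_nonneg assms(2) by (intro mult_right_mono) auto
  also have "\<dots> = exp (\<delta> * (h - a * real L))" by (simp add: algebra_simps flip: exp_add)
  also have "\<dots> \<le> exp (-2)"
  proof -
    have "\<delta> * (h - a * real L) \<le> \<delta> * (- 2 / \<delta>)" using assms by (intro mult_left_mono) auto
    then show ?thesis using assms(1) by simp
  qed
  finally show ?thesis using exp_minus_two_le by linarith
qed

lemma mgf_power_large:
  assumes "0 < \<delta>" "mgf t \<le> 1 + \<delta> * a"
  shows "mgf t ^ L * exp (- (\<delta> * (a * real L + 2 / \<delta>))) \<le> 1 / 4"
proof -
  have "mgf t ^ L \<le> exp ((\<delta> * a) * real L)"
    using power_le_exp[of "mgf t"] mgf_nonneg assms(2) by simp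
  then have "mgf t ^ L * exp (- (\<delta> * (a * real L + 2 / \<delta>)))
      \<le> exp ((\<delta> * a) * real L) * exp (- (\<delta> * (a * real L + 2 / \<delta>)))"
    by (intro mult_right_mono) auto
  also have "\<dots> = exp (-2)" using assms(1) by (simp add: algebra_simps flip: exp_add)
  finally show ?thesis using exp_minus_two_le by linarith
qed

lemma mgf_below_one:
  assumes mean: "(\<integral>x. g x \<partial>mu) < 0"
  obtains \<delta> a where "0 < \<delta>" "0 < a" "mgf \<delta> \<le> 1 - \<delta> * a"
proof -
  interpret M: prob_space mu by (rule prob_space_mu)
  define e where "e = (\<integral>x. g x \<partial>mu)"
  define \<delta> where "\<delta> = min (1 / B) (- e / (2 * B\<^sup>2))"
  have "0 < - e / (2 * B\<^sup>2)" using mean B_pos unfolding e_def by (intro divide_pos_pos) auto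
  then have \<delta>: "0 < \<delta>" unfolding \<delta>_def using B_pos by auto
  have \<delta>B: "\<bar>\<delta>\<bar> * B \<le> 1" using \<delta> B_pos unfolding \<delta>_def by (simp add: min_def field_simps)
  have \<delta>B2: "\<delta> * B\<^sup>2 \<le> - e / 2" unfolding \<delta>_def using B_pos by (auto simp: min_def field_simps)
  have "mgf \<delta> \<le> (1 + \<delta>\<^sup>2 * B\<^sup>2) * mgf 0 + \<delta> * mgf_deriv 0"
    using mgf_perturb[of \<delta> 0] \<delta>B by simp
  then have "mgf \<delta> \<le> 1 + \<delta> * (\<delta> * B\<^sup>2) + \<delta> * e"
    by (simp add: mgf_def mgf_deriv_def e_def M.prob_space algebra_simps power2_eq_square)
  moreover have "\<delta> * (\<delta> * B\<^sup>2) \<le> \<delta> * (- e / 2)" using \<delta>B2 \<delta> by (intro mult_left_mono) auto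
  ultimately have "mgf \<delta> \<le> 1 - \<delta> * (- e / 2)" by (simp add: algebra_simps)
  moreover have "0 < - e / 2" using mean unfolding e_def by simp
  ultimately show ?thesis using that \<delta> by blast
qed

lemma fall_likely:
  assumes "(\<integral>x. g x \<partial>mu) < 0"
  obtains A where "0 < A" "\<And>h. 0 \<le> h \<Longrightarrow> rise_likely mu (\<lambda>x. - g x) A h (1 / 2)"
proof -
  obtain \<delta> a where \<delta>: "0 < \<delta>" "0 < a" "mgf \<delta> \<le> 1 - \<delta> * a"
    using mgf_below_one assms by blast
  define A where "A = (1 + 2 / \<delta>) / a + 1"
  have "rise_likely mu (\<lambda>x. - g x) A h (1 / 2)" if h: "0 \<le> h" for h
  proof -
    obtain L :: nat where L: "1 \<le> L" "h + 2 / \<delta> \<le> a * real L" "real L \<le> A * h + A"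
      using block_length_choice[OF \<delta>(2,1) h] unfolding A_def by metis
    have "1 / 2 \<le> P.prob {\<omega> \<in> space PM. h \<le> (\<Sum>i\<in>J. - g (\<omega> i))}" if J: "finite J" "card J = L" for J
    proof -
      have "{\<omega> \<in> space PM. h \<le> (\<Sum>i\<in>J. - g (\<omega> i))} = {\<omega> \<in> space PM. (\<Sum>i\<in>J. g (\<omega> i)) \<le> - h}"
        by (auto simp: sum_negf)
      then show ?thesis
        using fall_prob_bound[OF J(1), of \<delta> h] mgf_power_small[OF \<delta>(1,3) L(2)] J(2) \<delta>(1) by simp
    qed
    then show ?thesis unfolding rise_likely_def using L by blast
  qed
  moreover have "0 < A" unfolding A_def using \<delta> by (simp add: add_pos_pos)
  ultimately show ?thesis using that by blast
qed

text \<open>Perturbing the tilt \<open>\<kappa>\<close> by \<open>\<mp>\<delta>\<close> moves the moment generating function by about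
  \<open>\<mp>\<delta> mgf_deriv \<kappa>\<close>; the two slopes differ by at most the factor \<open>r > 1\<close>.\<close>
lemma tilted_mgf_bounds:
  assumes \<kappa>: "0 < \<kappa>" and mgf_one: "mgf \<kappa> = 1" and mean: "(\<integral>x. g x \<partial>mu) \<noteq> 0" and r: "1 < r"
  obtains \<delta> a1 a2 where "0 < \<delta>" "0 < a1" "0 \<le> a2" "a2 \<le> r * a1"
    "mgf (\<kappa> - \<delta>) \<le> 1 - \<delta> * a1" "mgf (\<kappa> + \<delta>) \<le> 1 + \<delta> * a2"
proof -
  define m where "m = mgf_deriv \<kappa>"
  have m: "0 < m" unfolding m_def by (rule mgf_deriv_pos[OF \<kappa> mgf_one mean])
  define \<delta> where "\<delta> = min (1 / B) (m * (r - 1) / ((r + 1) * B\<^sup>2))"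
  have \<delta>: "0 < \<delta>" unfolding \<delta>_def using m r B_pos by auto
  have \<delta>B: "\<bar>\<delta>\<bar> * B \<le> 1" "\<bar>- \<delta>\<bar> * B \<le> 1"
    using \<delta> B_pos unfolding \<delta>_def by (simp_all add: min_def field_simps)
  have \<delta>B2: "\<delta> * B\<^sup>2 * (r + 1) \<le> m * (r - 1)"
  proof -
    have "\<delta> \<le> m * (r - 1) / ((r + 1) * B\<^sup>2)" unfolding \<delta>_def by simp
    then have "\<delta> * ((r + 1) * B\<^sup>2) \<le> m * (r - 1)"
      using B_pos r by (simp add: pos_le_divide_eq)
    then show ?thesis by (simp add: algebra_simps)
  qed
  define a1 where "a1 = m - \<delta> * B\<^sup>2"
  define a2 where "a2 = m + \<delta> * B\<^sup>2"
  have "(\<delta> * B\<^sup>2) * (r + 1) < m * (r + 1)"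
    using \<delta>B2 m r by (smt (verit) mult_strict_left_mono)
  then have a1: "0 < a1" unfolding a1_def using r by (simp add: mult_less_cancel_right)
  have "mgf (\<kappa> + (- \<delta>)) \<le> (1 + (- \<delta>)\<^sup>2 * B\<^sup>2) * mgf \<kappa> + (- \<delta>) * m"
    unfolding m_def using mgf_perturb \<delta>B(2) by blast
  then have "mgf (\<kappa> - \<delta>) \<le> 1 - \<delta> * a1"
    using mgf_one by (simp add: a1_def algebra_simps power2_eq_square)
  moreover have "mgf (\<kappa> + \<delta>) \<le> (1 + \<delta>\<^sup>2 * B\<^sup>2) * mgf \<kappa> + \<delta> * m"
    unfolding m_def using mgf_perturb \<delta>B(1) by blast
  then have "mgf (\<kappa> + \<delta>) \<le> 1 + \<delta> * a2"
    using mgf_one by (simp add: a2_def algebra_simps power2_eq_square)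
  moreover have "a2 \<le> r * a1" using \<delta>B2 unfolding a1_def a2_def by (simp add: algebra_simps)
  moreover have "0 \<le> a2" unfolding a2_def using m \<delta> by simp
  ultimately show ?thesis using that \<delta> a1 by blast
qed

lemma rise_not_unlikely:
  assumes \<kappa>: "0 < \<kappa>" and mgf_one: "mgf \<kappa> = 1" and mean: "(\<integral>x. g x \<partial>mu) \<noteq> 0" and r: "1 < r"
  obtains A c where "0 < A" "0 < c" "\<And>h. 0 \<le> h \<Longrightarrow> rise_likely mu g A h (c * exp (- (\<kappa> * r * h)))"
proof -
  obtain \<delta> a1 a2 where \<delta>: "0 < \<delta>" "0 < a1" "0 \<le> a2" "a2 \<le> r * a1"
    "mgf (\<kappa> - \<delta>) \<le> 1 - \<delta> * a1" "mgf (\<kappa> + \<delta>) \<le> 1 + \<delta> * a2"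
    using tilted_mgf_bounds[OF assms] by blast
  define A where "A = (1 + 2 / \<delta>) / a1 + 1"
  define C where "C = r * (2 / \<delta> + a1) + 2 / \<delta>"
  define c where "c = exp (- (\<kappa> * C)) / 2"
  have "rise_likely mu g A h (c * exp (- (\<kappa> * r * h)))" if h: "0 \<le> h" for h
  proof -
    obtain L :: nat where L: "1 \<le> L" "h + 2 / \<delta> \<le> a1 * real L" "a1 * real L \<le> h + 2 / \<delta> + a1"
      "real L \<le> A * h + A"
      using block_length_choice[OF \<delta>(2,1) h] unfolding A_def by metis
    define H where "H = a2 * real L + 2 / \<delta>"
    have "a2 * real L \<le> r * a1 * real L" using \<delta>(4) by (intro mult_right_mono) auto
    also have "\<dots> \<le> r * (h + 2 / \<delta> + a1)"
      using mult_left_mono[OF L(3), of r] r by (simp add: mult.assoc)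
    finally have "H \<le> r * h + C" unfolding H_def C_def by (simp add: algebra_simps)
    then have H_bound: "\<kappa> * H \<le> \<kappa> * (r * h) + \<kappa> * C"
      using mult_left_mono[of H "r * h + C" \<kappa>] \<kappa> by (simp add: distrib_left)
    have high: "mgf (\<kappa> + \<delta>) ^ L * exp (- (\<delta> * H)) \<le> 1 / 4"
      unfolding H_def by (rule mgf_power_large[OF \<delta>(1,6)])
    have "c * exp (- (\<kappa> * r * h)) \<le> P.prob {\<omega> \<in> space PM. h \<le> (\<Sum>i\<in>J. g (\<omega> i))}"
      if J: "finite J" "card J = L" for J
    proof -
      have "1 / 2 \<le> exp (\<kappa> * H) * P.prob {\<omega> \<in> space PM. h \<le> (\<Sum>i\<in>J. g (\<omega> i))}"
        using rise_prob_sandwich[OF J(1), of "\<kappa> - \<delta>" \<kappa> "\<kappa> + \<delta>" h H] mgf_power_small[OF \<delta>(1,5) L(2)]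
          high J(2) \<delta>(1) \<kappa> mgf_one by simp
      moreover have "exp (\<kappa> * H) * (c * exp (- (\<kappa> * r * h))) \<le> 1 / 2"
        using H_bound unfolding c_def by (simp add: algebra_simps flip: exp_add)
      ultimately have "exp (\<kappa> * H) * (c * exp (- (\<kappa> * r * h)))
          \<le> exp (\<kappa> * H) * P.prob {\<omega> \<in> space PM. h \<le> (\<Sum>i\<in>J. g (\<omega> i))}"
        by linarith
      then show ?thesis by (rule mult_left_le_imp_le) simp
    qed
    then show ?thesis unfolding rise_likely_def using L by blast
  qed
  moreover have "0 < A" unfolding A_def using \<delta> by (simp add: add_pos_pos)
  moreover have "0 < c" unfolding c_def by simp
  ultimately show ?thesis using that by blast
qed

lemma valley_bounds_negative_drift:
  assumes mean: "(\<integral>x. g x \<partial>mu) < 0" and \<kappa>: "0 < \<kappa>" "mgf \<kappa> = 1" and r: "1 < r"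
  obtains A c0 where "0 < A" "0 < c0"
    "\<And>h. 0 \<le> h \<Longrightarrow> \<exists>q1 q2. 0 \<le> q1 \<and> 0 \<le> q2 \<and> c0 * exp (- (\<kappa> * r * h)) \<le> q1 * q2 \<and>
            rise_likely mu (\<lambda>x. - g x) A h q1 \<and> rise_likely mu g A h q2"
proof -
  obtain A1 where A1: "0 < A1" "\<And>h. 0 \<le> h \<Longrightarrow> rise_likely mu (\<lambda>x. - g x) A1 h (1 / 2)"
    using fall_likely[OF mean] by blast
  have "(\<integral>x. g x \<partial>mu) \<noteq> 0" using mean by simp
  then obtain A2 c where A2: "0 < A2" "0 < c" "\<And>h. 0 \<le> h \<Longrightarrow> rise_likely mu g A2 h (c * exp (- (\<kappa> * r * h)))"
    using rise_not_unlikely[OF \<kappa> _ r] by blast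
  have "\<exists>q1 q2. 0 \<le> q1 \<and> 0 \<le> q2 \<and> c / 2 * exp (- (\<kappa> * r * h)) \<le> q1 * q2 \<and>
      rise_likely mu (\<lambda>x. - g x) (max A1 A2) h q1 \<and> rise_likely mu g (max A1 A2) h q2" if h: "0 \<le> h" for h
    using A1(2)[OF h] A2(3)[OF h] A2(2) h
    by (intro exI[of _ "1 / 2"] exI[of _ "c * exp (- (\<kappa> * r * h))"]) (auto intro: rise_likely_mono)
  then show ?thesis using that[of "max A1 A2" "c / 2"] A1(1) A2(2) by auto
qed

text \<open>For either sign of the drift, valleys of depth \<open>c ln n\<close> occur in \<open>[0, n^\<gamma>]\<close> for all large
  \<open>n\<close> almost surely, provided \<open>\<kappa> c < \<gamma>\<close>; positive drift is reduced to negative drift by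
  replacing \<open>g\<close> with \<open>- g\<close>, which exchanges falls and rises.\<close>
lemma valleys_nonzero_drift:
  assumes mean: "(\<integral>x. g x \<partial>mu) \<noteq> 0" and \<kappa>: "0 < \<kappa>"
    and neg: "(\<integral>x. g x \<partial>mu) < 0 \<Longrightarrow> mgf \<kappa> = 1"
    and pos: "(\<integral>x. g x \<partial>mu) > 0 \<Longrightarrow> mgf (- \<kappa>) = 1"
    and \<gamma>: "0 < \<gamma>" and c: "0 < c" "\<kappa> * c < \<gamma>"
  shows "AE \<omega> in PM. \<exists>n0::nat. \<forall>n\<ge>n0. \<exists>a l1 l2. 0 \<le> a \<and>
           real_of_int (a + int l1 + int l2) \<le> real n powr \<gamma> \<and> valley g \<omega> (c * ln (real n)) a l1 l2"
proof -
  define r where "r = (\<gamma> / (\<kappa> * c) + 1) / 2"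
  have "1 < \<gamma> / (\<kappa> * c)" using c \<kappa> by (simp add: field_simps)
  then have r: "1 < r" "\<kappa> * r * c < \<gamma>" unfolding r_def using c \<kappa> by (simp_all add: field_simps)
  obtain A c0 where A: "0 < A" "0 < c0" and bounds:
    "\<And>h. 0 \<le> h \<Longrightarrow> \<exists>q1 q2. 0 \<le> q1 \<and> 0 \<le> q2 \<and> c0 * exp (- (\<kappa> * r * h)) \<le> q1 * q2 \<and>
            rise_likely mu (\<lambda>x. - g x) A h q1 \<and> rise_likely mu g A h q2"
  proof (cases "(\<integral>x. g x \<partial>mu) < 0")
    case True
    then show ?thesis using valley_bounds_negative_drift[OF True \<kappa> neg[OF True] r(1)] that by blast
  next
    case False
    interpret flip: bounded_iid_sums mu "\<lambda>x. - g x" B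
      using g_bounded B_pos by unfold_locales auto
    have neg_mean: "(\<integral>x. - g x \<partial>mu) < 0" using False mean by simp
    have neg_mgf: "flip.mgf \<kappa> = 1" using pos False mean unfolding flip.mgf_def mgf_def by simp
    obtain A c0 where A: "0 < A" "0 < c0" and neg_bounds:
      "\<And>h. 0 \<le> h \<Longrightarrow> \<exists>q1 q2. 0 \<le> q1 \<and> 0 \<le> q2 \<and> c0 * exp (- (\<kappa> * r * h)) \<le> q1 * q2 \<and>
            rise_likely mu (\<lambda>x. - (- g x)) A h q1 \<and> rise_likely mu (\<lambda>x. - g x) A h q2"
      using flip.valley_bounds_negative_drift[OF neg_mean \<kappa>(1) neg_mgf r(1)] by blast
    show ?thesis
    proof (rule that[OF A])
      fix h :: real assume "0 \<le> h"
      from neg_bounds[OF this] obtain q1 q2 where "0 \<le> q1" "0 \<le> q2" "c0 * exp (- (\<kappa> * r * h)) \<le> q2 * q1"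
        "rise_likely mu g A h q1" "rise_likely mu (\<lambda>x. - g x) A h q2"
        by (auto simp: mult.commute)
      then show "\<exists>q1 q2. 0 \<le> q1 \<and> 0 \<le> q2 \<and> c0 * exp (- (\<kappa> * r * h)) \<le> q1 * q2 \<and>
            rise_likely mu (\<lambda>x. - g x) A h q1 \<and> rise_likely mu g A h q2"
        by blast
    qed
  qed
  show ?thesis
    by (rule valleys_eventually[OF c(1) \<gamma> _ _ A bounds]) (use \<kappa> r in auto)
qed

end

lemma potential_diff:
  assumes "0 \<le> a" "a \<le> b"
  shows "potential \<omega> b - potential \<omega> a = (\<Sum>i\<in>{a+1..b}. ln (rho \<omega> i))"
proof -
  have nonneg: "potential \<omega> x = (\<Sum>i\<in>{1..x}. ln (rho \<omega> i))" if "0 \<le> x" for x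
    using that by (simp add: potential_def)
  have split: "{1..b} = {1..a} \<union> {a+1..b}" using assms by auto
  have "(\<Sum>i\<in>{1..b}. ln (rho \<omega> i)) = (\<Sum>i\<in>{1..a}. ln (rho \<omega> i)) + (\<Sum>i\<in>{a+1..b}. ln (rho \<omega> i))"
    unfolding split by (rule sum.union_disjoint) auto
  then show ?thesis using assms by (simp add: nonneg)
qed

text \<open>A fall of the potential by \<open>h\<close> on \<open>[a, m]\<close> followed by a rise of \<open>h\<close> on \<open>[m, b]\<close> yields a
  trap of depth \<open>h\<close> spanning \<open>[a, b]\<close>, with bottom at a minimiser of the potential on \<open>[a, b]\<close>.\<close>
lemma trap_in_interval:
  assumes "a \<le> m" "m \<le> b" "potential \<omega> m - potential \<omega> a \<le> - h" "h \<le> potential \<omega> b - potential \<omega> m"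
  shows "\<exists>x b1 b2. trap \<omega> h x b1 b2 \<and> x - b1 = a \<and> x + b2 = b"
proof -
  have interval: "finite {a..b}" "{a..b} \<noteq> {}" using assms(1,2) by auto
  have "Min (potential \<omega> ` {a..b}) \<in> potential \<omega> ` {a..b}" using interval by (intro Min_in) auto
  then obtain x where x: "x \<in> {a..b}" "potential \<omega> x = Min (potential \<omega> ` {a..b})" by auto
  have x_min: "potential \<omega> x \<le> potential \<omega> y" if "y \<in> {a..b}" for y
    using x(2) interval that by simp
  have "potential \<omega> x \<le> potential \<omega> m" using x_min assms(1,2) by simp
  then have "h \<le> potential \<omega> a - potential \<omega> x" "h \<le> potential \<omega> b - potential \<omega> x"
    using assms(3,4) by linarith+
  then have "trap \<omega> h x (x - a) (b - x)"
    unfolding trap_def using x(1) x_min by auto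
  then show ?thesis by (intro exI[of _ x] exI[of _ "x - a"] exI[of _ "b - x"]) simp
qed

lemma traps_of_valleys:
  assumes ln_rho: "\<And>i. g (\<omega> i) = ln (rho \<omega> i)"
    and valleys: "\<exists>n0::nat. \<forall>n\<ge>n0. \<exists>a l1 l2. 0 \<le> a \<and>
           real_of_int (a + int l1 + int l2) \<le> real n powr \<gamma> \<and> valley g \<omega> (c * ln (real n)) a l1 l2"
  shows "\<exists>n0::nat. \<forall>n\<ge>n0. \<exists>x b1 b2. trap \<omega> (c * ln (real n)) x b1 b2 \<and>
           0 \<le> x - b1 \<and> real_of_int (x + b2) \<le> real n powr \<gamma>"
proof -
  obtain n0 :: nat where n0: "\<And>n. n0 \<le> n \<Longrightarrow> \<exists>a l1 l2. 0 \<le> a \<and>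
      real_of_int (a + int l1 + int l2) \<le> real n powr \<gamma> \<and> valley g \<omega> (c * ln (real n)) a l1 l2"
    using valleys by blast
  have "\<exists>x b1 b2. trap \<omega> (c * ln (real n)) x b1 b2 \<and> 0 \<le> x - b1 \<and> real_of_int (x + b2) \<le> real n powr \<gamma>"
    if n: "n0 \<le> n" for n
  proof -
    obtain a l1 l2 where a: "0 \<le> a" "real_of_int (a + int l1 + int l2) \<le> real n powr \<gamma>"
      and v: "valley g \<omega> (c * ln (real n)) a l1 l2"
      using n0[OF n] by blast
    have "potential \<omega> (a + int l1) - potential \<omega> a \<le> - (c * ln (real n))"
      using a(1) v by (subst potential_diff) (auto simp: valley_def ln_rho sum_negf)
    moreover have "c * ln (real n) \<le> potential \<omega> (a + int l1 + int l2) - potential \<omega> (a + int l1)"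
      using a(1) v by (subst potential_diff) (auto simp: valley_def ln_rho)
    ultimately have "\<exists>x b1 b2. trap \<omega> (c * ln (real n)) x b1 b2 \<and> x - b1 = a \<and> x + b2 = a + int l1 + int l2"
      by (intro trap_in_interval) auto
    then obtain x b1 b2 where t: "trap \<omega> (c * ln (real n)) x b1 b2" "x - b1 = a" "x + b2 = a + int l1 + int l2"
      by blast
    have "real_of_int (x + b2) \<le> real n powr \<gamma>" using t(3) a(2) by simp
    moreover have "0 \<le> x - b1" using t(2) a(1) by simp
    ultimately show ?thesis using t(1) by blast
  qed
  then show ?thesis by blast
qed

text \<open>On \<open>[\<epsilon>0, 1 - \<epsilon>0]\<close> the log-ratio \<open>ln ((1 - a) / a)\<close> is bounded by \<open>\<bar>ln \<epsilon>0\<bar>\<close>; clipping it at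
  this level gives a bounded Borel function that agrees with it almost surely.\<close>
definition clipped_log_ratio :: "real \<Rightarrow> real \<Rightarrow> real" where
  "clipped_log_ratio \<epsilon>0 a = max (- max 1 \<bar>ln \<epsilon>0\<bar>) (min (max 1 \<bar>ln \<epsilon>0\<bar>) (ln ((1 - a) / a)))"

lemma clipped_log_ratio_measurable [measurable]: "clipped_log_ratio \<epsilon>0 \<in> borel_measurable borel"
  unfolding clipped_log_ratio_def by measurable

lemma clipped_log_ratio_bounded: "\<bar>clipped_log_ratio \<epsilon>0 a\<bar> \<le> max 1 \<bar>ln \<epsilon>0\<bar>"
  unfolding clipped_log_ratio_def by auto

lemma clipped_log_ratio_eq:
  assumes \<epsilon>0: "0 < \<epsilon>0" and a: "\<epsilon>0 \<le> a" "a \<le> 1 - \<epsilon>0"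
  shows "clipped_log_ratio \<epsilon>0 a = ln ((1 - a) / a)"
proof -
  have upper: "(1 - a) / a \<le> 1 / \<epsilon>0" using a \<epsilon>0 by (simp add: frac_le)
  have "\<epsilon>0 * a \<le> \<epsilon>0" using a \<epsilon>0 by (intro mult_left_le) auto
  then have "\<epsilon>0 * a \<le> 1 - a" using a by linarith
  then have lower: "\<epsilon>0 \<le> (1 - a) / a" using a \<epsilon>0 by (simp add: le_divide_eq)
  have pos: "0 < (1 - a) / a" using lower \<epsilon>0 by linarith
  have "ln \<epsilon>0 \<le> ln ((1 - a) / a)" using lower pos \<epsilon>0 by simp
  moreover have "ln ((1 - a) / a) \<le> ln (1 / \<epsilon>0)" using upper pos \<epsilon>0 by simp
  moreover have "ln (1 / \<epsilon>0) = - ln \<epsilon>0" using \<epsilon>0 by (simp add: ln_div)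
  ultimately have "\<bar>ln ((1 - a) / a)\<bar> \<le> \<bar>ln \<epsilon>0\<bar>" by (simp add: abs_le_iff)
  then show ?thesis unfolding clipped_log_ratio_def by auto
qed

lemma integrals_clipped_log_ratio:
  fixes mu :: "real measure"
  assumes sets: "sets mu = sets borel" and \<epsilon>0: "0 < \<epsilon>0" and ae: "AE a in mu. \<epsilon>0 \<le> a \<and> a \<le> 1 - \<epsilon>0"
  shows "(\<integral>a. clipped_log_ratio \<epsilon>0 a \<partial>mu) = (\<integral>a. ln ((1 - a) / a) \<partial>mu)"
    and "(\<integral>a. exp (t * clipped_log_ratio \<epsilon>0 a) \<partial>mu) = (\<integral>a. ((1 - a) / a) powr t \<partial>mu)"
proof -
  have "AE a in mu. clipped_log_ratio \<epsilon>0 a = ln ((1 - a) / a)"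
    using ae by (rule AE_mp) (auto intro!: AE_I2 clipped_log_ratio_eq[OF \<epsilon>0])
  then show "(\<integral>a. clipped_log_ratio \<epsilon>0 a \<partial>mu) = (\<integral>a. ln ((1 - a) / a) \<partial>mu)"
    by (intro integral_cong_AE) (auto simp: measurable_cong_sets[OF sets refl])
  have "AE a in mu. exp (t * clipped_log_ratio \<epsilon>0 a) = ((1 - a) / a) powr t"
    using ae
  proof (rule AE_mp, intro AE_I2 impI)
    fix a assume a: "\<epsilon>0 \<le> a \<and> a \<le> 1 - \<epsilon>0"
    then have "0 < (1 - a) / a" using \<epsilon>0 by (intro divide_pos_pos) auto
    then show "exp (t * clipped_log_ratio \<epsilon>0 a) = ((1 - a) / a) powr t"
      using clipped_log_ratio_eq[OF \<epsilon>0] a \<epsilon>0 by (simp add: powr_def)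
  qed
  then show "(\<integral>a. exp (t * clipped_log_ratio \<epsilon>0 a) \<partial>mu) = (\<integral>a. ((1 - a) / a) powr t \<partial>mu)"
    by (intro integral_cong_AE) (auto simp: measurable_cong_sets[OF sets refl])
qed

theorem lemma3p3:
  fixes mu :: "real measure" and \<epsilon>0 \<kappa> \<gamma> \<epsilon> :: real
  assumes "prob_space mu"
    and "sets mu = sets borel"
    and "\<epsilon>0 > 0"
    and "AE a in mu. \<epsilon>0 \<le> a \<and> a \<le> 1 - \<epsilon>0"
    and "Inf {a. measure mu {b. b \<le> a} > 0} < 1/2"
    and "1/2 < Sup {a. measure mu {b. b \<ge> a} > 0}"
    and "(\<integral>a. ln ((1 - a) / a) \<partial>mu) \<noteq> 0"
    and "\<kappa> > 0"
    and "(\<integral>a. ln ((1 - a) / a) \<partial>mu) < 0 \<Longrightarrow> (\<integral>a. ((1 - a) / a) powr \<kappa> \<partial>mu) = 1"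
    and "(\<integral>a. ln ((1 - a) / a) \<partial>mu) > 0 \<Longrightarrow> (\<integral>a. ((1 - a) / a) powr (- \<kappa>) \<partial>mu) = 1"
    and "\<gamma> > 0"
    and "0 < \<epsilon>" and "\<epsilon> < \<gamma> / \<kappa>"
  shows "AE \<omega> in PiM (UNIV :: int set) (\<lambda>_. mu).
           \<exists>n0::nat. \<forall>n\<ge>n0. \<exists>x b1 b2.
             trap \<omega> ((\<gamma> / \<kappa> - \<epsilon>) * ln (real n)) x b1 b2 \<and>
             0 \<le> x - b1 \<and> real_of_int (x + b2) \<le> real n powr \<gamma>"
proof -
  interpret bounded_iid_sums mu "clipped_log_ratio \<epsilon>0" "max 1 \<bar>ln \<epsilon>0\<bar>"
    by (intro bounded_iid_sums.intro iid_sums.intro iid_sequence.intro bounded_iid_sums_axioms.intro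
        iid_sums_axioms.intro assms(1) clipped_log_ratio_bounded)
      (simp_all add: measurable_cong_sets[OF assms(2) refl])
  have mean: "(\<integral>a. clipped_log_ratio \<epsilon>0 a \<partial>mu) = (\<integral>a. ln ((1 - a) / a) \<partial>mu)"
    by (rule integrals_clipped_log_ratio(1)[OF assms(2-4)])
  have mgf: "mgf t = (\<integral>a. ((1 - a) / a) powr t \<partial>mu)" for t
    unfolding mgf_def by (rule integrals_clipped_log_ratio(2)[OF assms(2-4)])
  have depth: "0 < \<gamma> / \<kappa> - \<epsilon>" "\<kappa> * (\<gamma> / \<kappa> - \<epsilon>) < \<gamma>"
    using assms(8,12,13) by (simp_all add: algebra_simps)
  have "AE \<omega> in PM. \<exists>n0::nat. \<forall>n\<ge>n0. \<exists>a l1 l2. 0 \<le> a \<and> real_of_int (a + int l1 + int l2) \<le> real n powr \<gamma> \<and>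
          valley (clipped_log_ratio \<epsilon>0) \<omega> ((\<gamma> / \<kappa> - \<epsilon>) * ln (real n)) a l1 l2"
    by (rule valleys_nonzero_drift[OF _ assms(8) _ _ assms(11) depth]) (use assms(7,9,10) mean mgf in auto)
  moreover have "AE \<omega> in PM. \<forall>i. \<epsilon>0 \<le> \<omega> i \<and> \<omega> i \<le> 1 - \<epsilon>0" by (rule AE_coordinates[OF assms(4)])
  ultimately show ?thesis
  proof eventually_elim
    case (elim \<omega>)
    have "clipped_log_ratio \<epsilon>0 (\<omega> i) = ln (rho \<omega> i)" for i
      unfolding rho_def using elim(2) by (intro clipped_log_ratio_eq[OF assms(3)]) auto
    then show ?case by (rule traps_of_valleys[OF _ elim(1)])
  qed
qed

end
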